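(* Let $\alpha_1,\alpha_2,\alpha_3>0$ with $\alpha_1^{-2}=\alpha_2^{-2}+\alpha_3^{-2}$, let $a_1=-\alpha_2\alpha_3/\alpha_1$, $a_2=\alpha_3\alpha_1/\alpha_2$, $a_3=\alpha_1\alpha_2/\alpha_3$, and let $T$ be the real $7\times7$ matrix $$T=\begin{pmatrix}0&-\frac{\alpha_1}{2}&\frac{\alpha_2}{2}&\frac{\alpha_3}{2}&\frac{\alpha_1}{2}&-\frac{\alpha_2}{2}&-\frac{\alpha_3}{2}\\ \alpha_1&-2a_1&0&0&0&-\alpha_3&-\alpha_2\\ \alpha_2&0&-2a_2&0&\alpha_3&0&\alpha_1\\ \alpha_3&0&0&-2a_3&\alpha_2&\alpha_1&0\\ -\alpha_1&0&\alpha_3&\alpha_2&2a_1&0&0\\ -\alpha_2&-\alpha_3&0&-\alpha_1&0&2a_2&0\\ -\alpha_3&-\alpha_2&-\alpha_1&0&0&0&2a_3\end{pmatrix}.$$ Let $\mathbf{a}=(0,\alpha_1,\alpha_2,\alpha_3,\alpha_1,\alpha_2,\alpha_3)^{\mathrm T}$ and let $\lambda>0$ with $\lambda^2=a_2^2-a_1a_3$. Then $T\mathbf{a}=0$, and there exist real constants $b_1,\dots,b_5,c_1,\dots,c_5,d_1,\dots,d_6$ such that the nonzero vectors $\mathbf{b}_+=(b_1,b_2,0,b_3,b_4,0,b_5)^{\mathrm T}$, $\mathbf{b}_-=(b_1,b_4,0,b_5,b_2,0,b_3)^{\mathrm T}$, $\mathbf{c}_+=(c_1,0,c_2,c_3,0,c_4,c_5)^{\mathrm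 T}$, $\mathbf{c}_-=(c_1,0,c_4,c_5,0,c_2,c_3)^{\mathrm T}$, $\mathbf{d}_+=(0,d_1,d_2,d_3,d_4,d_5,d_6)^{\mathrm T}$, $\mathbf{d}_-=(0,d_4,d_5,d_6,d_1,d_2,d_3)^{\mathrm T}$ satisfy $T\mathbf{b}_\pm=\pm\lambda\mathbf{b}_\pm$, $T\mathbf{c}_\pm=\pm\lambda\mathbf{c}_\pm$, $T\mathbf{d}_\pm=\pm3\lambda\mathbf{d}_\pm$, and for each choice of sign the pair $\{\mathbf{b}_\pm,\mathbf{c}_\pm\}$ is linearly independent. *)

theory Defs
  imports "HOL-Analysis.Analysis" "HOL-Library.Numeral_Type"
begin

definition acoef1 :: "real \<Rightarrow> real \<Rightarrow> real \<Rightarrow> real" where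
  "acoef1 \<alpha>1 \<alpha>2 \<alpha>3 = - \<alpha>2 * \<alpha>3 / \<alpha>1"
definition acoef2 :: "real \<Rightarrow> real \<Rightarrow> real \<Rightarrow> real" where
  "acoef2 \<alpha>1 \<alpha>2 \<alpha>3 = \<alpha>3 * \<alpha>1 / \<alpha>2"
definition acoef3 :: "real \<Rightarrow> real \<Rightarrow> real \<Rightarrow> real" where
  "acoef3 \<alpha>1 \<alpha>2 \<alpha>3 = \<alpha>1 * \<alpha>2 / \<alpha>3"

definition Tmat :: "real \<Rightarrow> real \<Rightarrow> real \<Rightarrow> real^7^7" where
  "Tmat \<alpha>1 \<alpha>2 \<alpha>3 =
    (let a1 = acoef1 \<alpha>1 \<alpha>2 \<alpha>3; a2 = acoef2 \<alpha>1 \<alpha>2 \<alpha>3; a3 = acoef3 \<alpha>1 \<alpha>2 \<alpha>3 in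
     vector [
       vector [0, - \<alpha>1/2, \<alpha>2/2, \<alpha>3/2, \<alpha>1/2, - \<alpha>2/2, - \<alpha>3/2],
       vector [\<alpha>1, -2*a1, 0, 0, 0, - \<alpha>3, - \<alpha>2],
       vector [\<alpha>2, 0, -2*a2, 0, \<alpha>3, 0, \<alpha>1],
       vector [\<alpha>3, 0, 0, -2*a3, \<alpha>2, \<alpha>1, 0],
       vector [- \<alpha>1, 0, \<alpha>3, \<alpha>2, 2*a1, 0, 0],
       vector [- \<alpha>2, - \<alpha>3, 0, - \<alpha>1, 0, 2*a2, 0],
       vector [- \<alpha>3, - \<alpha>2, - \<alpha>1, 0, 0, 0, 2*a3]])"

end

theory Submission
  imports Defs
begin

(* Put s = \<alpha>2 \<alpha>3 / \<alpha>1 and G = s \<lambda>.  Then s^2 = \<alpha>2^2 + \<alpha>3^2, the matrix s T has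
   entries polynomial in \<alpha>2, \<alpha>3, s, and G^2 = \<alpha>2^4 + \<alpha>2^2 \<alpha>3^2 + \<alpha>3^4.  If
   (s T)^2 w = \<mu>^2 w, then s T w + \<mu> w is an eigenvector of s T for \<mu>; so it suffices to find
   such w for \<mu>^2 = G^2 and \<mu>^2 = 9 G^2, and these can be taken with small polynomial entries
   in \<alpha>2, \<alpha>3, s alone.  The involution exchanging the coordinates 2,3,4 with 5,6,7
   anticommutes with T, hence maps eigenvectors for \<mu> to eigenvectors for -\<mu>; applied to
   b_+, c_+, d_+ it yields exactly the shapes of b_-, c_-, d_-. *)

lemma exhaust_7:
  fixes x :: 7
  shows "x = 1 \<or> x = 2 \<or> x = 3 \<or> x = 4 \<or> x = 5 \<or> x = 6 \<or> x = 7"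
proof (induct x)
  case (of_int z)
  then have "z = 0 \<or> z = 1 \<or> z = 2 \<or> z = 3 \<or> z = 4 \<or> z = 5 \<or> z = 6" by fastforce
  then show ?case by auto
qed

lemma forall_7: "(\<forall>i::7. P i) \<longleftrightarrow> P 1 \<and> P 2 \<and> P 3 \<and> P 4 \<and> P 5 \<and> P 6 \<and> P 7"
  by (metis exhaust_7)

lemma UNIV_7: "UNIV = {1, 2, 3, 4, 5, 6, 7::7}"
  using exhaust_7 by auto

lemma sum_7: "sum f (UNIV::7 set) = f 1 + f 2 + f 3 + f 4 + f 5 + f 6 + f 7"
  unfolding UNIV_7 by (simp add: ac_simps)

lemma vector_7 [simp]:
  "(vector [x1, x2, x3, x4, x5, x6, x7] :: ('a::zero)^7) $ 1 = x1"
  "(vector [x1, x2, x3, x4, x5, x6, x7] :: ('a::zero)^7) $ 2 = x2"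
  "(vector [x1, x2, x3, x4, x5, x6, x7] :: ('a::zero)^7) $ 3 = x3"
  "(vector [x1, x2, x3, x4, x5, x6, x7] :: ('a::zero)^7) $ 4 = x4"
  "(vector [x1, x2, x3, x4, x5, x6, x7] :: ('a::zero)^7) $ 5 = x5"
  "(vector [x1, x2, x3, x4, x5, x6, x7] :: ('a::zero)^7) $ 6 = x6"
  "(vector [x1, x2, x3, x4, x5, x6, x7] :: ('a::zero)^7) $ 7 = x7"
  unfolding vector_def by simp_all

lemma independent_pair_by_coordinates:
  fixes u v :: "real^'n"
  assumes "u $ i \<noteq> 0" "v $ i = 0" "v $ j \<noteq> 0" "u $ j = 0"
  shows "independent {u, v}"
proof -
  have "u \<notin> span {v}"
  proof
    assume "u \<in> span {v}"
    then obtain c where "u = c *\<^sub>R v" by (auto simp: span_singleton)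
    then show False using assms by simp
  qed
  moreover have "v \<noteq> 0" using assms by auto
  ultimately show ?thesis by (simp add: independent_insert)
qed

lemma eigenvector_rescale:
  fixes A :: "real^'n^'n" and v :: "real^'n"
  assumes "c \<noteq> 0" and "(c *\<^sub>R A) *v v = (c * \<mu>) *\<^sub>R v"
  shows "A *v v = \<mu> *\<^sub>R v"
proof -
  have "c *\<^sub>R (A *v v) = c *\<^sub>R (\<mu> *\<^sub>R v)"
    using assms(2) by (simp add: scaleR_matrix_vector_assoc)
  then show ?thesis using assms(1) scaleR_cancel_left by blast
qed

lemma eigenvector_of_square:
  fixes A :: "real^'n^'n"
  assumes "v = A *v w + \<mu> *\<^sub>R w" and "A *v (A *v w) = \<mu>^2 *\<^sub>R w"
  shows "A *v v = \<mu> *\<^sub>R v"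
  using assms by (simp add: matrix_vector_right_distrib matrix_vector_mult_scaleR algebra_simps
      power2_eq_square)

definition swap_halves :: "('a::zero)^7 \<Rightarrow> 'a^7" where
  "swap_halves v = vector [v$1, v$5, v$6, v$7, v$2, v$3, v$4]"

lemma swap_halves_vector [simp]:
  "swap_halves (vector [x1, x2, x3, x4, x5, x6, x7]) = vector [x1, x5, x6, x7, x2, x3, x4]"
  by (simp add: swap_halves_def)

lemma swap_halves_swap_halves [simp]: "swap_halves (swap_halves v) = v"
  unfolding vec_eq_iff forall_7 by (simp add: swap_halves_def)

lemma linear_swap_halves: "linear (swap_halves :: real^7 \<Rightarrow> real^7)"
  by (rule linearI) (simp_all add: vec_eq_iff forall_7 swap_halves_def)

lemma inj_swap_halves: "inj swap_halves"
  by (metis injI swap_halves_swap_halves)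

lemma swap_halves_eq_0_iff [simp]: "swap_halves (v :: real^7) = 0 \<longleftrightarrow> v = 0"
  by (metis linear_swap_halves linear_0 swap_halves_swap_halves)

lemma independent_swap_halves:
  fixes u v :: "real^7"
  assumes "independent {u, v}"
  shows "independent {swap_halves u, swap_halves v}"
  using linear_independent_injective_image[OF linear_swap_halves assms
      inj_on_subset[OF inj_swap_halves subset_UNIV]]
  by simp

lemma swap_halves_eigenvector_pairs:
  fixes T :: "real^7^7"
  assumes anti: "\<And>v. T *v swap_halves v = - swap_halves (T *v v)"
    and eig: "T *v b = lam *\<^sub>R b" "T *v c = lam *\<^sub>R c" "T *v d = (3 * lam) *\<^sub>R d"
    and zeros: "b $ 3 = 0" "b $ 6 = 0" "c $ 2 = 0" "c $ 5 = 0" "d $ 1 = 0"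
    and indep: "independent {b, c}" and "b \<noteq> c" and "d \<noteq> 0"
  shows "\<exists>b1 b2 b3 b4 b5 c1 c2 c3 c4 c5 d1 d2 d3 d4 d5 d6 :: real.
        let bp = (vector [b1, b2, 0, b3, b4, 0, b5] :: real^7);
            bm = (vector [b1, b4, 0, b5, b2, 0, b3] :: real^7);
            cp = (vector [c1, 0, c2, c3, 0, c4, c5] :: real^7);
            cm = (vector [c1, 0, c4, c5, 0, c2, c3] :: real^7);
            dp = (vector [0, d1, d2, d3, d4, d5, d6] :: real^7);
            dm = (vector [0, d4, d5, d6, d1, d2, d3] :: real^7)
        in bp \<noteq> 0 \<and> bm \<noteq> 0 \<and> cp \<noteq> 0 \<and> cm \<noteq> 0 \<and> dp \<noteq> 0 \<and> dm \<noteq> 0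
         \<and> T *v bp = lam *\<^sub>R bp \<and> T *v bm = (- lam) *\<^sub>R bm
         \<and> T *v cp = lam *\<^sub>R cp \<and> T *v cm = (- lam) *\<^sub>R cm
         \<and> T *v dp = (3 * lam) *\<^sub>R dp \<and> T *v dm = (- 3 * lam) *\<^sub>R dm
         \<and> bp \<noteq> cp \<and> independent {bp, cp}
         \<and> bm \<noteq> cm \<and> independent {bm, cm}"
proof -
  obtain b1 b2 b3 b4 b5 where b: "b = vector [b1, b2, 0, b3, b4, 0, b5]"
    by (rule that[of "b$1" "b$2" "b$4" "b$5" "b$7"]) (simp add: vec_eq_iff forall_7 zeros)
  obtain c1 c2 c3 c4 c5 where c: "c = vector [c1, 0, c2, c3, 0, c4, c5]"
    by (rule that[of "c$1" "c$3" "c$4" "c$6" "c$7"]) (simp add: vec_eq_iff forall_7 zeros)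
  obtain d1 d2 d3 d4 d5 d6 where d: "d = vector [0, d1, d2, d3, d4, d5, d6]"
    by (rule that[of "d$2" "d$3" "d$4" "d$5" "d$6" "d$7"]) (simp add: vec_eq_iff forall_7 zeros)
  have swap_eig: "T *v swap_halves v = (- \<mu>) *\<^sub>R swap_halves v" if "T *v v = \<mu> *\<^sub>R v" for v \<mu>
    using that by (simp add: anti linear_scale[OF linear_swap_halves])
  have "b \<noteq> 0" "c \<noteq> 0" using indep dependent_zero[of "{b, c}"] by auto
  then have "swap_halves b \<noteq> 0" "swap_halves c \<noteq> 0" "swap_halves d \<noteq> 0"
    using \<open>d \<noteq> 0\<close> by simp_all
  moreover have "swap_halves b \<noteq> swap_halves c" using \<open>b \<noteq> c\<close> by (metis swap_halves_swap_halves)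
  moreover have "T *v swap_halves d = (- 3 * lam) *\<^sub>R swap_halves d"
    using swap_eig[OF eig(3)] by simp
  moreover note eig swap_eig[OF eig(1)] swap_eig[OF eig(2)] \<open>b \<noteq> 0\<close> \<open>c \<noteq> 0\<close>
    \<open>b \<noteq> c\<close> \<open>d \<noteq> 0\<close> indep independent_swap_halves[OF indep]
  ultimately show ?thesis
    unfolding Let_def b c d swap_halves_vector by blast
qed

lemma Tmat_swap_halves: "Tmat x y z *v swap_halves v = - swap_halves (Tmat x y z *v v)"
  unfolding vec_eq_iff forall_7
  by (simp add: matrix_vector_mult_def sum_7 Tmat_def Let_def swap_halves_def algebra_simps)

lemma Tmat_kernel:
  assumes "x \<noteq> 0" "y \<noteq> 0" "z \<noteq> 0"
  shows "Tmat x y z *v vector [0, x, y, z, x, y, z] = 0"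
  unfolding vec_eq_iff forall_7 using assms
  by (simp add: matrix_vector_mult_def sum_7 Tmat_def Let_def acoef1_def acoef2_def acoef3_def
      field_simps)

definition Tmat_scaled :: "real \<Rightarrow> real \<Rightarrow> real \<Rightarrow> real^7^7" where
  "Tmat_scaled y z s = vector [
    vector [0, - y*z/2, s*y/2, s*z/2, y*z/2, - s*y/2, - s*z/2],
    vector [y*z, 2 * s^2, 0, 0, 0, - s*z, - s*y],
    vector [s*y, 0, -2*z^2, 0, s*z, 0, y*z],
    vector [s*z, 0, 0, -2*y^2, s*y, y*z, 0],
    vector [- y*z, 0, s*z, s*y, -2 * s^2, 0, 0],
    vector [- s*y, - s*z, 0, - y*z, 0, 2*z^2, 0],
    vector [- s*z, - s*y, - y*z, 0, 0, 0, 2*y^2]]"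

lemma Tmat_scaled_eq:
  assumes "x \<noteq> 0" "y \<noteq> 0" "z \<noteq> 0"
  shows "Tmat_scaled y z (y*z/x) = (y*z/x) *\<^sub>R Tmat x y z"
  unfolding vec_eq_iff forall_7 using assms
  by (simp add: Tmat_scaled_def Tmat_def Let_def acoef1_def acoef2_def acoef3_def
      field_simps power2_eq_square)

lemma Tmat_eigenvector_of_scaled:
  assumes "x \<noteq> 0" "y \<noteq> 0" "z \<noteq> 0"
    and "Tmat_scaled y z (y*z/x) *v v = (y*z/x * \<mu>) *\<^sub>R v"
  shows "Tmat x y z *v v = \<mu> *\<^sub>R v"
proof (rule eigenvector_rescale)
  show "y*z/x \<noteq> 0" using assms(1-3) by simp
  show "(y*z/x) *\<^sub>R Tmat x y z *v v = (y*z/x * \<mu>) *\<^sub>R v"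
    using assms(4) by (simp only: Tmat_scaled_eq[OF assms(1-3)])
qed

lemma scale_factor_sq:
  fixes x y z :: real
  assumes "x \<noteq> 0" "y \<noteq> 0" "z \<noteq> 0" and "1 / x^2 = 1 / y^2 + 1 / z^2"
  shows "(y*z/x)^2 = y^2 + z^2"
proof -
  have "(y*z/x)^2 = y^2 * z^2 * (1 / x^2)" by (simp add: power_divide power_mult_distrib)
  also have "\<dots> = y^2 + z^2" using assms by (simp add: field_simps)
  finally show ?thesis .
qed

lemma scaled_eigenvalue_sq:
  assumes "x \<noteq> 0" "y \<noteq> 0" "z \<noteq> 0" and "(y*z/x)^2 = y^2 + z^2"
    and "lam^2 = (acoef2 x y z)^2 - acoef1 x y z * acoef3 x y z"
  shows "(y*z/x * lam)^2 = y^4 + y^2*z^2 + z^4"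
proof -
  have lam2: "lam^2 = (z*x/y)^2 + y^2"
    using assms by (simp add: acoef1_def acoef2_def acoef3_def power2_eq_square)
  have zz: "y*z/x * (z*x/y) = z^2"
    using assms(1,2) by (simp add: field_simps power2_eq_square)
  have "(y*z/x * lam)^2 = (y*z/x * (z*x/y))^2 + (y*z/x)^2 * y^2"
    by (simp only: power_mult_distrib lam2 distrib_left)
  also have "\<dots> = (z^2)^2 + (y^2 + z^2) * y^2"
    by (simp only: zz assms(4))
  also have "\<dots> = y^4 + y^2*z^2 + z^4"
    by algebra
  finally show ?thesis .
qed

definition bvec :: "real \<Rightarrow> real \<Rightarrow> real \<Rightarrow> real \<Rightarrow> real^7" where
  "bvec y z s G = vector [- z*(s^2 + y^2), y*(s^2 + G), 0, s*(y^2 - G), y*(s^2 - G), 0, s*(y^2 + G)]"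

definition cvec :: "real \<Rightarrow> real \<Rightarrow> real \<Rightarrow> real \<Rightarrow> real^7" where
  "cvec y z s G = vector [s*(y^2 - z^2), 0, y*(G - z^2), z*(y^2 - G), 0, - y*(z^2 + G), z*(y^2 + G)]"

definition dvec :: "real \<Rightarrow> real \<Rightarrow> real \<Rightarrow> real \<Rightarrow> real^7" where
  "dvec y z s G = vector [0,
     s*(2 * s^4 + y^4 + z^4) + 3*G * s^3, - z*(s^4 + y^4 + 2*z^4) + 3*G*z^3,
     - y*(s^4 + 2*y^4 + z^4) + 3*G*y^3,
     s*(2 * s^4 + y^4 + z^4) - 3*G * s^3, - z*(s^4 + y^4 + 2*z^4) - 3*G*z^3,
     - y*(s^4 + 2*y^4 + z^4) - 3*G*y^3]"

lemma Tmat_scaled_bvec: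
  assumes "s^2 = y^2 + z^2" "G^2 = y^4 + y^2*z^2 + z^4"
  shows "Tmat_scaled y z s *v bvec y z s G = G *\<^sub>R bvec y z s G"
proof -
  define w :: "real^7" where "w = vector [0, y, 0, - s, - y, 0, s]"
  have "bvec y z s G = Tmat_scaled y z s *v w + G *\<^sub>R w"
    unfolding w_def vec_eq_iff forall_7
    by (simp add: matrix_vector_mult_def sum_7 Tmat_scaled_def bvec_def algebra_simps
        power2_eq_square)
  moreover have "Tmat_scaled y z s *v (Tmat_scaled y z s *v w) = G^2 *\<^sub>R w"
    unfolding w_def vec_eq_iff forall_7 assms(2)
    apply (simp add: matrix_vector_mult_def sum_7 Tmat_scaled_def)
    apply (intro conjI)
    apply (algebra | use assms(1) in algebra)+
    done
  ultimately show ?thesis by (rule eigenvector_of_square)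
qed

lemma Tmat_scaled_cvec:
  assumes "s^2 = y^2 + z^2" "G^2 = y^4 + y^2*z^2 + z^4"
  shows "Tmat_scaled y z s *v cvec y z s G = G *\<^sub>R cvec y z s G"
proof -
  define w :: "real^7" where "w = vector [0, 0, y, - z, 0, - y, z]"
  have "cvec y z s G = Tmat_scaled y z s *v w + G *\<^sub>R w"
    unfolding w_def vec_eq_iff forall_7
    by (simp add: matrix_vector_mult_def sum_7 Tmat_scaled_def cvec_def algebra_simps
        power2_eq_square)
  moreover have "Tmat_scaled y z s *v (Tmat_scaled y z s *v w) = G^2 *\<^sub>R w"
    unfolding w_def vec_eq_iff forall_7 assms(2)
    apply (simp add: matrix_vector_mult_def sum_7 Tmat_scaled_def)
    apply (intro conjI)
    apply (algebra | use assms(1) in algebra)+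
    done
  ultimately show ?thesis by (rule eigenvector_of_square)
qed

lemma Tmat_scaled_dvec:
  assumes "s^2 = y^2 + z^2" "G^2 = y^4 + y^2*z^2 + z^4"
  shows "Tmat_scaled y z s *v dvec y z s G = (3 * G) *\<^sub>R dvec y z s G"
proof -
  define w :: "real^7" where "w = vector [0, s^3, z^3, y^3, -(s^3), -(z^3), -(y^3)]"
  have decomposition: "dvec y z s G = Tmat_scaled y z s *v w + (3 * G) *\<^sub>R w"
    unfolding w_def vec_eq_iff forall_7
    apply (simp add: matrix_vector_mult_def sum_7 Tmat_scaled_def dvec_def)
    apply (intro conjI)
    apply (algebra | use assms(1) in algebra)+
    done
  have "Tmat_scaled y z s *v (Tmat_scaled y z s *v w) = (9 * (y^4 + y^2*z^2 + z^4)) *\<^sub>R w"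
    unfolding w_def vec_eq_iff forall_7
    apply (simp add: matrix_vector_mult_def sum_7 Tmat_scaled_def)
    apply (intro conjI)
    apply (algebra | use assms(1) in algebra)+
    done
  moreover have "(3 * G)^2 = 9 * (y^4 + y^2*z^2 + z^4)"
    using assms(2) by (simp add: power_mult_distrib)
  ultimately have "Tmat_scaled y z s *v (Tmat_scaled y z s *v w) = (3 * G)^2 *\<^sub>R w"
    by simp
  with decomposition show ?thesis by (rule eigenvector_of_square)
qed

lemma bvec_neq_cvec:
  assumes "y > 0" "G > 0"
  shows "bvec y z s G \<noteq> cvec y z s G"
proof -
  have "s^2 + G > 0" using assms(2) by (simp add: add_nonneg_pos)
  then have "bvec y z s G $ 2 \<noteq> 0" using assms(1) by (simp add: bvec_def)
  then show ?thesis by (auto simp: cvec_def)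
qed

lemma independent_bvec_cvec:
  assumes "y > 0" "z > 0" "G > 0" "G^2 = y^4 + y^2*z^2 + z^4"
  shows "independent {bvec y z s G, cvec y z s G}"
proof (rule independent_pair_by_coordinates[where i = 2 and j = 3])
  have "s^2 + G > 0" using assms(3) by (simp add: add_nonneg_pos)
  then show "bvec y z s G $ 2 \<noteq> 0" using assms(1) by (simp add: bvec_def)
  have "G^2 - (z^2)^2 = y^2 * (y^2 + z^2)" using assms(4) by algebra
  moreover have "y^2 * (y^2 + z^2) > 0" using assms(1,2) by (simp add: add_pos_pos)
  ultimately have "(z^2)^2 < G^2" by linarith
  then have "z^2 < G" using assms(3) by (simp add: power2_less_imp_less)
  then show "cvec y z s G $ 3 \<noteq> 0" using assms(1) by (simp add: cvec_def)
qed (simp_all add: bvec_def cvec_def)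

lemma dvec_nonzero:
  assumes "s > 0" "G > 0"
  shows "dvec y z s G \<noteq> 0"
proof -
  have "dvec y z s G $ 2 > 0"
    using assms by (simp add: dvec_def add_pos_nonneg)
  then show ?thesis by auto
qed

lemma Tmat_eigenvectors:
  fixes x y z lam :: real
  assumes "x > 0" "y > 0" "z > 0" and "1 / x^2 = 1 / y^2 + 1 / z^2"
    and "lam > 0" and "lam^2 = (acoef2 x y z)^2 - acoef1 x y z * acoef3 x y z"
  defines "s \<equiv> y*z/x" and "G \<equiv> y*z/x * lam"
  shows "Tmat x y z *v bvec y z s G = lam *\<^sub>R bvec y z s G"
    and "Tmat x y z *v cvec y z s G = lam *\<^sub>R cvec y z s G"
    and "Tmat x y z *v dvec y z s G = (3 * lam) *\<^sub>R dvec y z s G"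
    and "independent {bvec y z s G, cvec y z s G}"
    and "bvec y z s G \<noteq> cvec y z s G"
    and "dvec y z s G \<noteq> 0"
proof -
  have nz: "x \<noteq> 0" "y \<noteq> 0" "z \<noteq> 0" using assms(1-3) by simp_all
  have "s > 0" "G > 0" using assms(1-3,5) by (simp_all add: s_def G_def)
  have s2: "s^2 = y^2 + z^2"
    unfolding s_def using nz assms(4) by (rule scale_factor_sq)
  have G2: "G^2 = y^4 + y^2*z^2 + z^4"
    unfolding G_def using nz s2[unfolded s_def] assms(6) by (rule scaled_eigenvalue_sq)
  have eig: "Tmat x y z *v v = \<mu> *\<^sub>R v"
    if "Tmat_scaled y z s *v v = (s * \<mu>) *\<^sub>R v" for v \<mu>
    using nz that unfolding s_def by (rule Tmat_eigenvector_of_scaled)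
  show "Tmat x y z *v bvec y z s G = lam *\<^sub>R bvec y z s G"
    using Tmat_scaled_bvec[OF s2 G2] by (intro eig) (simp add: G_def s_def)
  show "Tmat x y z *v cvec y z s G = lam *\<^sub>R cvec y z s G"
    using Tmat_scaled_cvec[OF s2 G2] by (intro eig) (simp add: G_def s_def)
  show "Tmat x y z *v dvec y z s G = (3 * lam) *\<^sub>R dvec y z s G"
    using Tmat_scaled_dvec[OF s2 G2] by (intro eig) (simp add: G_def s_def ac_simps)
  show "independent {bvec y z s G, cvec y z s G}"
    using assms(2,3) \<open>G > 0\<close> G2 by (rule independent_bvec_cvec)
  show "bvec y z s G \<noteq> cvec y z s G"
    using assms(2) \<open>G > 0\<close> by (rule bvec_neq_cvec)
  show "dvec y z s G \<noteq> 0"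
    using \<open>s > 0\<close> \<open>G > 0\<close> by (rule dvec_nonzero)
qed

theorem proposition5p5:
  fixes \<alpha>1 \<alpha>2 \<alpha>3 lam :: real
  assumes pos1: "\<alpha>1 > 0" and pos2: "\<alpha>2 > 0" and pos3: "\<alpha>3 > 0"
    and rel: "1 / \<alpha>1^2 = 1 / \<alpha>2^2 + 1 / \<alpha>3^2"
    and lam_pos: "lam > 0"
    and lam_sq: "lam^2 = (acoef2 \<alpha>1 \<alpha>2 \<alpha>3)^2 - acoef1 \<alpha>1 \<alpha>2 \<alpha>3 * acoef3 \<alpha>1 \<alpha>2 \<alpha>3"
  shows "Tmat \<alpha>1 \<alpha>2 \<alpha>3 *v (vector [0, \<alpha>1, \<alpha>2, \<alpha>3, \<alpha>1, \<alpha>2, \<alpha>3] :: real^7) = 0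
    \<and> (\<exists>b1 b2 b3 b4 b5 c1 c2 c3 c4 c5 d1 d2 d3 d4 d5 d6 :: real.
        let T = Tmat \<alpha>1 \<alpha>2 \<alpha>3;
            bp = (vector [b1, b2, 0, b3, b4, 0, b5] :: real^7);
            bm = (vector [b1, b4, 0, b5, b2, 0, b3] :: real^7);
            cp = (vector [c1, 0, c2, c3, 0, c4, c5] :: real^7);
            cm = (vector [c1, 0, c4, c5, 0, c2, c3] :: real^7);
            dp = (vector [0, d1, d2, d3, d4, d5, d6] :: real^7);
            dm = (vector [0, d4, d5, d6, d1, d2, d3] :: real^7)
        in bp \<noteq> 0 \<and> bm \<noteq> 0 \<and> cp \<noteq> 0 \<and> cm \<noteq> 0 \<and> dp \<noteq> 0 \<and> dm \<noteq> 0
         \<and> T *v bp = lam *\<^sub>R bp \<and> T *v bm = (- lam) *\<^sub>R bm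
         \<and> T *v cp = lam *\<^sub>R cp \<and> T *v cm = (- lam) *\<^sub>R cm
         \<and> T *v dp = (3 * lam) *\<^sub>R dp \<and> T *v dm = (- 3 * lam) *\<^sub>R dm
         \<and> bp \<noteq> cp \<and> independent {bp, cp}
         \<and> bm \<noteq> cm \<and> independent {bm, cm})"
proof -
  define s where "s = \<alpha>2 * \<alpha>3 / \<alpha>1"
  define b where "b = bvec \<alpha>2 \<alpha>3 s (s * lam)"
  define c where "c = cvec \<alpha>2 \<alpha>3 s (s * lam)"
  define d where "d = dvec \<alpha>2 \<alpha>3 s (s * lam)"
  note eigen = Tmat_eigenvectors[OF pos1 pos2 pos3 rel lam_pos lam_sq,
      folded s_def, folded b_def c_def d_def]
  have zeros: "b $ 3 = 0" "b $ 6 = 0" "c $ 2 = 0" "c $ 5 = 0" "d $ 1 = 0"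
    by (simp_all add: b_def c_def d_def bvec_def cvec_def dvec_def)
  have "Tmat \<alpha>1 \<alpha>2 \<alpha>3 *v vector [0, \<alpha>1, \<alpha>2, \<alpha>3, \<alpha>1, \<alpha>2, \<alpha>3] = 0"
    using pos1 pos2 pos3 by (intro Tmat_kernel) simp_all
  then show ?thesis
    using swap_halves_eigenvector_pairs[OF Tmat_swap_halves eigen(1-3) zeros eigen(4-6)]
    unfolding Let_def by (rule conjI)
qed

end
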